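(* Let $N\ge 3$ and let $a_1,\dots,a_{2N}$, $x$ be real (or complex) numbers and $y\neq 0$. Let $G_N(x;a_1,\dots,a_{2N})$ be the determinant of the $N\times N$ matrix whose diagonal entries are $x+a_{2i-1}+a_{2i}$ ($1\le i\le N$), whose superdiagonal entries $(i,i+1)$ are $1$ ($1\le i\le N-1$), whose subdiagonal entries $(i+1,i)$ are $a_{2i}a_{2i+1}$ ($1\le i\le N-1$), whose $(1,N)$ entry is $(-1)^{N-1}a_1a_{2N}/y$, whose $(N,1)$ entry is $(-1)^{N-1}y$, and all of whose other entries are $0$. Then $$G_N(x;a_1,\dots,a_{2N}) = y+\frac{\prod_{i=1}^{2N}a_i}{y}+\sum_{k=0}^{N} e_k^{(N)}x^{N-k},$$ where $e_0^{(N)}=1$ and, for $1\le k\le N$, $$e_k^{(N)}=\sum_{\substack{1\le i_1\triangleleft i_2\triangleleft\cdots\triangleleft i_k\le 2N\\ (i_1,i_k)\neq(1,2N)}} a_{i_1}a_{i_2}\cdots a_{i_k}.$$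
   Context: For integers $i,j$, the notation $i\triangleleft j$ means $i+1<j$. The sum defining $e_k^{(N)}$ runs over all increasing index tuples $(i_1,\dots,i_k)$ with $1\le i_1$, $i_k\le 2N$, consecutive indices differing by at least $2$, and excluding tuples with $i_1=1$ and $i_k=2N$ simultaneously. *)

theory Defs
  imports Complex_Main "Jordan_Normal_Form.Determinant"
begin

text \<open>The N x N matrix of the statement, 0-indexed: entry (i,j) corresponds to the
paper's entry (i+1,j+1). The sequence a is indexed 1..2N as in the paper.\<close>
definition GN_matrix :: "nat \<Rightarrow> complex \<Rightarrow> complex \<Rightarrow> (nat \<Rightarrow> complex) \<Rightarrow> complex mat" where
  "GN_matrix N x y a = mat N N (\<lambda>(i,j).
     if i = 0 \<and> j = N - 1 then (-1)^(N-1) * a 1 * a (2*N) / y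
     else if i = N - 1 \<and> j = 0 then (-1)^(N-1) * y
     else if i = j then x + a (2*i+1) + a (2*i+2)
     else if j = i + 1 then 1
     else if i = j + 1 then a (2*j+2) * a (2*j+3)
     else 0)"

definition G_N :: "nat \<Rightarrow> complex \<Rightarrow> complex \<Rightarrow> (nat \<Rightarrow> complex) \<Rightarrow> complex" where
  "G_N N x y a = det (GN_matrix N x y a)"

definition e_idx :: "nat \<Rightarrow> nat \<Rightarrow> nat set set" where
  "e_idx N k = {S. S \<subseteq> {1..2*N} \<and> card S = k \<and>
      (\<forall>i\<in>S. \<forall>j\<in>S. i < j \<longrightarrow> i + 1 < j) \<and> \<not> (1 \<in> S \<and> 2*N \<in> S)}"

definition e_coef :: "nat \<Rightarrow> (nat \<Rightarrow> complex) \<Rightarrow> nat \<Rightarrow> complex" where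
  "e_coef N a k = (if k = 0 then 1 else \<Sum>S\<in>e_idx N k. \<Prod>i\<in>S. a i)"

end

theory Submission
  imports Defs
begin

text \<open>
  Apart from its corner entries \<open>u = (-1)^(N-1) a\<^sub>1 a\<^sub>2\<^sub>N / y\<close> and
  \<open>v = (-1)^(N-1) y\<close>, the matrix is tridiagonal. Expanding along the first and the last row,
  its determinant is \<open>det T\<^sub>N + (-1)^(N-1) u \<Prod>(subdiagonal) + (-1)^(N-1) v - u v det T'\<close>,
  where \<open>T\<^sub>N\<close> is the tridiagonal part and \<open>T'\<close> its inner block of size \<open>N - 2\<close>;
  the two middle terms are \<open>\<Prod>a\<^sub>i / y\<close> and \<open>y\<close>.
  Tridiagonal determinants are continuants: they obey the same three-term recurrence as the sums
  \<open>\<Sum>\<^sub>S (\<Prod>\<^sub>i\<^sub>\<in>\<^sub>S a\<^sub>i) x^(m - |S|)\<close> over the sets \<open>S \<subseteq> {1..2m}\<close> without two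
  consecutive elements. The sets of this kind in \<open>{1..2N}\<close> that contain both \<open>1\<close> and \<open>2N\<close>
  correspond, after removing these ends and shifting down by 2, to those in \<open>{1..2N-4}\<close>, so their
  contribution is \<open>a\<^sub>1 a\<^sub>2\<^sub>N det T'\<close>; what remains is \<open>\<Sum> e\<^sub>k x^(N-k)\<close>.
\<close>

lemma mat_delete_mat:
  "mat_delete (mat n n f) k l =
     mat (n-1) (n-1) (\<lambda>(i,j). f (if i < k then i else Suc i, if j < l then j else Suc j))"
  unfolding mat_delete_def by (rule eq_matI) auto

lemma det_mat_cong:
  assumes "\<And>i j. i < n \<Longrightarrow> j < n \<Longrightarrow> f (i,j) = g (i,j)"
  shows "det (mat n n f) = det (mat n n g)"
  by (rule arg_cong[where f=det], rule eq_matI) (auto simp: assms)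

lemma det_mat_add_row:
  fixes f g h :: "nat \<times> nat \<Rightarrow> 'a::comm_ring_1"
  assumes k: "k < n"
    and g: "\<And>i j. i < n \<Longrightarrow> j < n \<Longrightarrow> i \<noteq> k \<Longrightarrow> g (i,j) = f (i,j)"
    and h: "\<And>i j. i < n \<Longrightarrow> j < n \<Longrightarrow> i \<noteq> k \<Longrightarrow> h (i,j) = f (i,j)"
    and row: "\<And>j. j < n \<Longrightarrow> f (k,j) = g (k,j) + h (k,j)"
  shows "det (mat n n f) = det (mat n n g) + det (mat n n h)"
proof -
  have cof_g: "cofactor (mat n n g) k j = cofactor (mat n n f) k j" for j
    unfolding cofactor_def mat_delete_mat
    by (rule arg_cong[where f="\<lambda>A. _ * det A"], rule eq_matI) (use k in \<open>auto intro!: g\<close>)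
  have cof_h: "cofactor (mat n n h) k j = cofactor (mat n n f) k j" for j
    unfolding cofactor_def mat_delete_mat
    by (rule arg_cong[where f="\<lambda>A. _ * det A"], rule eq_matI) (use k in \<open>auto intro!: h\<close>)
  have "det (mat n n f) = (\<Sum>j<n. mat n n f $$ (k,j) * cofactor (mat n n f) k j)"
    by (rule laplace_expansion_row[OF _ k]) auto
  also have "\<dots> = (\<Sum>j<n. mat n n g $$ (k,j) * cofactor (mat n n g) k j)
      + (\<Sum>j<n. mat n n h $$ (k,j) * cofactor (mat n n h) k j)"
    unfolding sum.distrib[symmetric]
    by (rule sum.cong) (use k in \<open>auto simp: cof_g cof_h row distrib_right\<close>)
  also have "\<dots> = det (mat n n g) + det (mat n n h)"
    using laplace_expansion_row[OF _ k, of "mat n n g"] laplace_expansion_row[OF _ k, of "mat n n h"]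
    by auto
  finally show ?thesis .
qed

lemma det_mat_single_entry_row:
  fixes f :: "nat \<times> nat \<Rightarrow> 'a::comm_ring_1"
  assumes k: "k < n" and l: "l < n"
    and zero: "\<And>j. j < n \<Longrightarrow> j \<noteq> l \<Longrightarrow> f (k,j) = 0"
  shows "det (mat n n f) = (-1)^(k+l) * f (k,l) *
    det (mat (n-1) (n-1) (\<lambda>(i,j). f (if i < k then i else Suc i, if j < l then j else Suc j)))"
proof -
  have "det (mat n n f) = (\<Sum>j<n. mat n n f $$ (k,j) * cofactor (mat n n f) k j)"
    by (rule laplace_expansion_row[OF _ k]) auto
  also have "\<dots> = (\<Sum>j<n. if j = l then f (k,l) * cofactor (mat n n f) k l else 0)"
    by (rule sum.cong) (use k zero in auto)
  also have "\<dots> = f (k,l) * cofactor (mat n n f) k l" using l by simp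
  finally show ?thesis unfolding cofactor_def mat_delete_mat by (simp add: ac_simps)
qed

lemma det_mat_single_entry_col:
  fixes f :: "nat \<times> nat \<Rightarrow> 'a::comm_ring_1"
  assumes k: "k < n" and l: "l < n"
    and zero: "\<And>i. i < n \<Longrightarrow> i \<noteq> k \<Longrightarrow> f (i,l) = 0"
  shows "det (mat n n f) = (-1)^(k+l) * f (k,l) *
    det (mat (n-1) (n-1) (\<lambda>(i,j). f (if i < k then i else Suc i, if j < l then j else Suc j)))"
proof -
  have "det (mat n n f) = (\<Sum>i<n. mat n n f $$ (i,l) * cofactor (mat n n f) i l)"
    by (rule laplace_expansion_column[OF _ l]) auto
  also have "\<dots> = (\<Sum>i<n. if i = k then f (k,l) * cofactor (mat n n f) k l else 0)"
    by (rule sum.cong) (use l zero in auto)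
  also have "\<dots> = f (k,l) * cofactor (mat n n f) k l" using k by simp
  finally show ?thesis unfolding cofactor_def mat_delete_mat by (simp add: ac_simps)
qed

definition tridiag :: "(nat \<Rightarrow> 'a::comm_ring_1) \<Rightarrow> (nat \<Rightarrow> 'a) \<Rightarrow> nat \<times> nat \<Rightarrow> 'a" where
  "tridiag d s = (\<lambda>(i,j). if i = j then d i else if j = i + 1 then 1 else if i = j + 1 then s j else 0)"

lemma tridiag_diag [simp]: "tridiag d s (i,i) = d i"
  and tridiag_super [simp]: "tridiag d s (i, Suc i) = 1"
  and tridiag_sub [simp]: "tridiag d s (Suc j, j) = s j"
  by (simp_all add: tridiag_def)

lemma tridiag_eq_0: "Suc i < j \<or> Suc j < i \<Longrightarrow> tridiag d s (i,j) = 0"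
  by (auto simp: tridiag_def)

lemma tridiag_Suc_Suc: "tridiag d s (Suc i, Suc j) = tridiag (d \<circ> Suc) (s \<circ> Suc) (i,j)"
  by (auto simp: tridiag_def)

lemma det_tridiag_last_row_sub:
  "det (mat (m+2) (m+2) (\<lambda>(i,j). if i = m+1 \<and> j \<noteq> m then 0 else tridiag d s (i,j)))
    = - (s m * det (mat m m (tridiag d s)))"
proof -
  define h where "h = (\<lambda>(i,j). if i = m+1 \<and> j \<noteq> m then 0 else tridiag d s (i,j))"
  define h' where "h' = (\<lambda>(i,j). tridiag d s (i, if j < m then j else Suc j))"
  have "det (mat (m+2) (m+2) h) = (-1)^(m+1+m) * h (m+1,m) *
    det (mat (m+1) (m+1) (\<lambda>(i,j). h (if i < m+1 then i else Suc i, if j < m then j else Suc j)))"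
    using det_mat_single_entry_row[of "m+1" "m+2" m h] by (simp add: h_def)
  also have "det (mat (m+1) (m+1) (\<lambda>(i,j). h (if i < m+1 then i else Suc i, if j < m then j else Suc j)))
     = det (mat (m+1) (m+1) h')"
    by (rule det_mat_cong) (auto simp: h_def h'_def)
  also have "\<dots> = (-1)^(m+m) * h' (m,m) *
    det (mat m m (\<lambda>(i,j). h' (if i < m then i else Suc i, if j < m then j else Suc j)))"
    using det_mat_single_entry_col[of m "m+1" m h'] by (simp add: h'_def tridiag_eq_0)
  also have "det (mat m m (\<lambda>(i,j). h' (if i < m then i else Suc i, if j < m then j else Suc j)))
     = det (mat m m (tridiag d s))"
    by (rule det_mat_cong) (auto simp: h'_def)
  finally show ?thesis
    by (simp add: h_def h'_def)
qed

lemma det_tridiag_Suc_Suc: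
  "det (mat (m+2) (m+2) (tridiag d s)) =
     d (m+1) * det (mat (m+1) (m+1) (tridiag d s)) - s m * det (mat m m (tridiag d s))"
proof -
  define g where "g = (\<lambda>(i,j). if i = m+1 \<and> j \<noteq> m+1 then 0 else tridiag d s (i,j))"
  define h where "h = (\<lambda>(i,j). if i = m+1 \<and> j \<noteq> m then 0 else tridiag d s (i,j))"
  have "det (mat (m+2) (m+2) (tridiag d s)) = det (mat (m+2) (m+2) g) + det (mat (m+2) (m+2) h)"
  proof (rule det_mat_add_row[where k="m+1"])
    fix j assume "j < m+2"
    then consider "j = m" | "j = m+1" | "j < m" by linarith
    then show "tridiag d s (m+1, j) = g (m+1, j) + h (m+1, j)"
      by cases (auto simp: g_def h_def tridiag_eq_0)
  qed (auto simp: g_def h_def)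
  moreover have "det (mat (m+2) (m+2) g) = d (m+1) * det (mat (m+1) (m+1) (tridiag d s))"
  proof -
    have "det (mat (m+2) (m+2) g) = (-1)^(m+1+(m+1)) * g (m+1,m+1) *
      det (mat (m+1) (m+1) (\<lambda>(i,j). g (if i < m+1 then i else Suc i, if j < m+1 then j else Suc j)))"
      using det_mat_single_entry_row[of "m+1" "m+2" "m+1" g] by (simp add: g_def)
    also have "det (mat (m+1) (m+1) (\<lambda>(i,j). g (if i < m+1 then i else Suc i, if j < m+1 then j else Suc j)))
       = det (mat (m+1) (m+1) (tridiag d s))"
      by (rule det_mat_cong) (auto simp: g_def)
    finally show ?thesis by (simp add: g_def)
  qed
  ultimately show ?thesis
    using det_tridiag_last_row_sub[of m d s] unfolding h_def by simp
qed

lemma det_tridiag_drop_first_row: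
  "det (mat n n (\<lambda>(i,j). tridiag d s (Suc i, j))) = (\<Prod>i<n. s i)"
proof -
  have "det (mat n n (\<lambda>(i,j). tridiag d s (Suc i, j)))
      = prod_list (diag_mat (mat n n (\<lambda>(i,j). tridiag d s (Suc i, j))))"
    by (rule det_upper_triangular) (auto simp: upper_triangular_def tridiag_eq_0)
  then show ?thesis
    unfolding prod_list_diag_prod by (simp add: atLeast0LessThan)
qed

lemma det_tridiag_drop_first_col:
  "det (mat n n (\<lambda>(i,j). tridiag d s (i, Suc j))) = 1"
proof -
  have "det (mat n n (\<lambda>(i,j). tridiag d s (i, Suc j)))
      = prod_list (diag_mat (mat n n (\<lambda>(i,j). tridiag d s (i, Suc j))))"
    by (rule det_lower_triangular[of n]) (auto simp: tridiag_eq_0)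
  then show ?thesis
    unfolding prod_list_diag_prod by simp
qed

lemma det_tridiag_top_corner:
  assumes "n \<ge> 1"
  shows "det (mat n n (\<lambda>(i,j). if i = 0 then (if j = n-1 then u else 0) else tridiag d s (i,j)))
    = (-1)^(n-1) * u * (\<Prod>i<n-1. s i)"
proof -
  let ?A = "\<lambda>(i,j). if i = 0 then (if j = n-1 then u else 0) else tridiag d s (i,j)"
  have "det (mat n n ?A) = (-1)^(0+(n-1)) * ?A (0, n-1) *
      det (mat (n-1) (n-1) (\<lambda>(i,j). ?A (if i < 0 then i else Suc i, if j < n-1 then j else Suc j)))"
    by (rule det_mat_single_entry_row) (use assms in auto)
  also have "det (mat (n-1) (n-1) (\<lambda>(i,j). ?A (if i < 0 then i else Suc i, if j < n-1 then j else Suc j)))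
      = det (mat (n-1) (n-1) (\<lambda>(i,j). tridiag d s (Suc i, j)))"
    by (rule det_mat_cong) auto
  finally show ?thesis by (simp add: det_tridiag_drop_first_row)
qed

lemma det_tridiag_bottom_corner:
  assumes "n \<ge> 1"
  shows "det (mat n n (\<lambda>(i,j). if i = n-1 then (if j = 0 then v else 0) else tridiag d s (i,j)))
    = (-1)^(n-1) * v"
proof -
  let ?B = "\<lambda>(i,j). if i = n-1 then (if j = 0 then v else 0) else tridiag d s (i,j)"
  have "det (mat n n ?B) = (-1)^(n-1+0) * ?B (n-1, 0) *
      det (mat (n-1) (n-1) (\<lambda>(i,j). ?B (if i < n-1 then i else Suc i, if j < 0 then j else Suc j)))"
    by (rule det_mat_single_entry_row) (use assms in auto)
  also have "det (mat (n-1) (n-1) (\<lambda>(i,j). ?B (if i < n-1 then i else Suc i, if j < 0 then j else Suc j)))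
      = det (mat (n-1) (n-1) (\<lambda>(i,j). tridiag d s (i, Suc j)))"
    by (rule det_mat_cong) auto
  finally show ?thesis by (simp add: det_tridiag_drop_first_col)
qed

lemma det_tridiag_both_corners:
  fixes d s :: "nat \<Rightarrow> 'a::comm_ring_1"
  assumes n: "n \<ge> 3"
  shows "det (mat n n (\<lambda>(i,j). if i = 0 then (if j = n-1 then u else 0)
      else if i = n-1 then (if j = 0 then v else 0) else tridiag d s (i,j)))
    = - (u * v * det (mat (n-2) (n-2) (tridiag (d \<circ> Suc) (s \<circ> Suc))))"
proof -
  let ?C = "\<lambda>(i,j). if i = 0 then (if j = n-1 then u else 0)
      else if i = n-1 then (if j = 0 then v else 0) else tridiag d s (i,j)"
  define C' where "C' = (\<lambda>(i,j). if i = n-2 then (if j = 0 then v else 0) else tridiag d s (Suc i, j))"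
  have "det (mat n n ?C) = (-1)^(0+(n-1)) * ?C (0, n-1) *
      det (mat (n-1) (n-1) (\<lambda>(i,j). ?C (if i < 0 then i else Suc i, if j < n-1 then j else Suc j)))"
    by (rule det_mat_single_entry_row) (use n in auto)
  also have "det (mat (n-1) (n-1) (\<lambda>(i,j). ?C (if i < 0 then i else Suc i, if j < n-1 then j else Suc j)))
      = det (mat (n-1) (n-1) C')"
    by (rule det_mat_cong) (use n in \<open>auto simp: C'_def\<close>)
  also have "\<dots> = (-1)^(n-2+0) * C' (n-2, 0) *
      det (mat (n-2) (n-2) (\<lambda>(i,j). C' (if i < n-2 then i else Suc i, if j < 0 then j else Suc j)))"
    using det_mat_single_entry_row[of "n-2" "n-1" 0 C', unfolded diff_diff_left one_add_one] n
    by (simp add: C'_def)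
  also have "det (mat (n-2) (n-2) (\<lambda>(i,j). C' (if i < n-2 then i else Suc i, if j < 0 then j else Suc j)))
      = det (mat (n-2) (n-2) (tridiag (d \<circ> Suc) (s \<circ> Suc)))"
    by (rule det_mat_cong) (simp add: C'_def tridiag_Suc_Suc)
  finally have "det (mat n n ?C) = (-1)^(n-1) * u * ((-1)^(n-2) * v *
      det (mat (n-2) (n-2) (tridiag (d \<circ> Suc) (s \<circ> Suc))))"
    using n by (simp add: C'_def)
  moreover have "(-1::'a)^(n-1) = - ((-1)^(n-2))"
  proof -
    have "n - 1 = Suc (n-2)"
      using n by simp
    then show ?thesis
      by simp
  qed
  ultimately show ?thesis
    by (simp add: algebra_simps flip: power_add mult_2)
qed

lemma det_tridiag_with_corners:
  fixes d s :: "nat \<Rightarrow> 'a::comm_ring_1"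
  assumes n: "n \<ge> 3"
  shows "det (mat n n (\<lambda>(i,j). if i = 0 \<and> j = n-1 then u else if i = n-1 \<and> j = 0 then v
      else tridiag d s (i,j)))
    = det (mat n n (tridiag d s)) + (-1)^(n-1) * u * (\<Prod>i<n-1. s i) + (-1)^(n-1) * v
      - u * v * det (mat (n-2) (n-2) (tridiag (d \<circ> Suc) (s \<circ> Suc)))"
proof -
  define F where "F = (\<lambda>(i,j). if i = 0 \<and> j = n-1 then u else if i = n-1 \<and> j = 0 then v
      else tridiag d s (i,j))"
  define Bot where "Bot = (\<lambda>(i,j). if i = n-1 \<and> j = 0 then v else tridiag d s (i,j))"
  define Top where "Top = (\<lambda>(i,j). if i = 0 then (if j = n-1 then u else 0)
      else if i = n-1 \<and> j = 0 then v else tridiag d s (i,j))"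
  have corners_0: "tridiag d s (0, n-1) = 0" "tridiag d s (n-1, 0) = 0"
    using n by (simp_all add: tridiag_eq_0)
  have "det (mat n n F) = det (mat n n Bot) + det (mat n n Top)"
    by (rule det_mat_add_row[where k=0]) (use n corners_0 in \<open>auto simp: F_def Bot_def Top_def\<close>)
  also have "det (mat n n Bot) = det (mat n n (tridiag d s))
      + det (mat n n (\<lambda>(i,j). if i = n-1 then (if j = 0 then v else 0) else tridiag d s (i,j)))"
    by (rule det_mat_add_row[where k="n-1"]) (use n corners_0 in \<open>auto simp: Bot_def\<close>)
  also have "det (mat n n Top)
      = det (mat n n (\<lambda>(i,j). if i = 0 then (if j = n-1 then u else 0) else tridiag d s (i,j)))
      + det (mat n n (\<lambda>(i,j). if i = 0 then (if j = n-1 then u else 0)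
          else if i = n-1 then (if j = 0 then v else 0) else tridiag d s (i,j)))"
    by (rule det_mat_add_row[where k="n-1"]) (use n corners_0 in \<open>auto simp: Top_def\<close>)
  finally show ?thesis
    using n det_tridiag_top_corner[of n u d s] det_tridiag_bottom_corner[of n v d s]
      det_tridiag_both_corners[OF n, of u v d s]
    unfolding F_def by simp
qed

definition sparse_sets :: "nat \<Rightarrow> nat set set" where
  "sparse_sets n = {S. S \<subseteq> {1..n} \<and> (\<forall>i\<in>S. \<forall>j\<in>S. i < j \<longrightarrow> i + 1 < j)}"

text \<open>\<open>(n+1) div 2\<close> is the largest size of a set in \<open>sparse_sets n\<close>
  (lemma \<open>card_sparse_set_le\<close>), so the truncated subtraction in the exponent is harmless.\<close>
definition sparse_poly :: "'a::comm_ring_1 \<Rightarrow> (nat \<Rightarrow> 'a) \<Rightarrow> nat \<Rightarrow> 'a" where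
  "sparse_poly x a n = (\<Sum>S\<in>sparse_sets n. (\<Prod>i\<in>S. a i) * x ^ ((n+1) div 2 - card S))"

lemma finite_sparse_sets [simp]: "finite (sparse_sets n)"
  by (rule finite_subset[of _ "Pow {1..n}"]) (auto simp: sparse_sets_def)

lemma sparse_setsD:
  assumes "S \<in> sparse_sets n"
  shows "S \<subseteq> {1..n}" and "finite S" and "i \<in> S \<Longrightarrow> j \<in> S \<Longrightarrow> i < j \<Longrightarrow> i + 1 < j"
  using assms finite_subset[of S "{1..n}"] by (auto simp: sparse_sets_def)

lemma sparse_sets_0: "sparse_sets 0 = {{}}"
  and sparse_sets_1: "sparse_sets (Suc 0) = {{}, {1}}"
  by (auto simp: sparse_sets_def)

lemma sparse_sets_Suc_Suc:
  "sparse_sets (Suc (Suc n)) = sparse_sets (Suc n) \<union> insert (Suc (Suc n)) ` sparse_sets n"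
proof (intro equalityI subsetI)
  fix S assume S: "S \<in> sparse_sets (Suc (Suc n))"
  show "S \<in> sparse_sets (Suc n) \<union> insert (Suc (Suc n)) ` sparse_sets n"
  proof (cases "Suc (Suc n) \<in> S")
    case False
    then have "S \<in> sparse_sets (Suc n)"
      using S unfolding sparse_sets_def by (auto simp: subset_iff le_Suc_eq)
    then show ?thesis by simp
  next
    case True
    then have "Suc n \<notin> S"
      using S unfolding sparse_sets_def by force
    then have "S - {Suc (Suc n)} \<in> sparse_sets n"
      using S unfolding sparse_sets_def by (auto simp: subset_iff le_Suc_eq)
    moreover have "S = insert (Suc (Suc n)) (S - {Suc (Suc n)})"
      using True by auto
    ultimately show ?thesis by blast
  qed
qed (auto simp: sparse_sets_def)

lemma card_sparse_set_le: "S \<in> sparse_sets n \<Longrightarrow> card S \<le> (n+1) div 2"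
proof (induction n arbitrary: S rule: induct_nat_012)
  case (ge2 n)
  from ge2.prems[unfolded sparse_sets_Suc_Suc] show ?case
  proof
    assume "S \<in> insert (Suc (Suc n)) ` sparse_sets n"
    then obtain T where T: "T \<in> sparse_sets n" and S: "S = insert (Suc (Suc n)) T"
      by auto
    have "Suc (Suc n) \<notin> T"
      using sparse_setsD(1)[OF T] by auto
    then have "card S = Suc (card T)"
      using S sparse_setsD(2)[OF T] by simp
    with ge2.IH(1)[OF T] show ?thesis by simp
  qed (use ge2.IH(2) in fastforce)
qed (auto simp: sparse_sets_0 sparse_sets_1)

lemma sparse_poly_Suc_Suc:
  "sparse_poly x a (n+2) = (\<Sum>S\<in>sparse_sets (n+1). (\<Prod>i\<in>S. a i) * x ^ ((n+3) div 2 - card S))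
     + a (n+2) * (\<Sum>S\<in>sparse_sets n. (\<Prod>i\<in>S. a i) * x ^ ((n+3) div 2 - Suc (card S)))"
proof -
  let ?f = "\<lambda>S. (\<Prod>i\<in>S. a i) * x ^ ((n+3) div 2 - card S)"
  have notin: "n+2 \<notin> S" if "S \<in> sparse_sets n" for S
    using sparse_setsD(1)[OF that] by auto
  have inj: "inj_on (insert (n+2)) (sparse_sets n)"
    by (rule inj_onI) (metis insert_ident notin)
  have "sparse_poly x a (n+2) = sum ?f (sparse_sets (n+1) \<union> insert (n+2) ` sparse_sets n)"
    unfolding sparse_poly_def using sparse_sets_Suc_Suc[of n] by (simp add: eval_nat_numeral)
  also have "\<dots> = sum ?f (sparse_sets (n+1)) + sum ?f (insert (n+2) ` sparse_sets n)"
    by (rule sum.union_disjoint) (auto simp: sparse_sets_def)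
  also have "sum ?f (insert (n+2) ` sparse_sets n)
      = a (n+2) * (\<Sum>S\<in>sparse_sets n. (\<Prod>i\<in>S. a i) * x ^ ((n+3) div 2 - Suc (card S)))"
    unfolding sum.reindex[OF inj] sum_distrib_left
  proof (rule sum.cong)
    fix S assume "S \<in> sparse_sets n"
    with notin[OF this] sparse_setsD(2)[OF this]
    show "(?f \<circ> insert (n+2)) S
        = a (n+2) * ((\<Prod>i\<in>S. a i) * x ^ ((n+3) div 2 - Suc (card S)))"
      by (simp add: mult.assoc)
  qed simp
  finally show ?thesis .
qed

lemma sparse_poly_even_step:
  "sparse_poly x a (2*m+2) = sparse_poly x a (2*m+1) + a (2*m+2) * sparse_poly x a (2*m)"
  using sparse_poly_Suc_Suc[of x a "2*m"] by (simp add: sparse_poly_def)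

lemma sparse_poly_odd_step:
  "sparse_poly x a (2*m+3) = x * sparse_poly x a (2*m+2) + a (2*m+3) * sparse_poly x a (2*m+1)"
proof -
  have "(\<Sum>S\<in>sparse_sets (2*m+2). (\<Prod>i\<in>S. a i) * x ^ ((2*m+4) div 2 - card S))
      = x * sparse_poly x a (2*m+2)"
    unfolding sparse_poly_def sum_distrib_left
  proof (rule sum.cong)
    fix S assume "S \<in> sparse_sets (2*m+2)"
    then have "(2*m+4) div 2 - card S = Suc ((2*m+3) div 2 - card S)"
      using card_sparse_set_le[of S "2*m+2"] by simp
    then show "(\<Prod>i\<in>S. a i) * x ^ ((2*m+4) div 2 - card S)
        = x * ((\<Prod>i\<in>S. a i) * x ^ ((2*m+2+1) div 2 - card S))"
      by simp
  qed simp
  moreover have "(\<Sum>S\<in>sparse_sets (2*m+1). (\<Prod>i\<in>S. a i) * x ^ ((2*m+4) div 2 - Suc (card S)))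
      = sparse_poly x a (2*m+1)"
    unfolding sparse_poly_def by (rule sum.cong) auto
  moreover have "2*m+3 = (2*m+1)+2" "(2*m+1)+1 = 2*m+2" "2*m+1+3 = 2*m+4"
    by simp_all
  ultimately show ?thesis
    using sparse_poly_Suc_Suc[of x a "2*m+1"] by metis
qed

lemma sparse_poly_even_rec:
  "sparse_poly x a (2*m+4) = (x + a (2*m+3) + a (2*m+4)) * sparse_poly x a (2*m+2)
     - a (2*m+2) * a (2*m+3) * sparse_poly x a (2*m)"
proof -
  have "2*(m+1)+2 = 2*m+4" "2*(m+1)+1 = 2*m+3" "2*(m+1) = 2*m+2"
    by simp_all
  then have even: "sparse_poly x a (2*m+4)
      = sparse_poly x a (2*m+3) + a (2*m+4) * sparse_poly x a (2*m+2)"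
    using sparse_poly_even_step[of x a "m+1"] by metis
  have odd: "sparse_poly x a (2*m+1)
      = sparse_poly x a (2*m+2) - a (2*m+2) * sparse_poly x a (2*m)"
    using sparse_poly_even_step[of x a m] by simp
  show ?thesis
    unfolding even sparse_poly_odd_step odd by (simp add: algebra_simps)
qed

lemma det_tridiag_eq_sparse_poly:
  "det (mat m m (tridiag (\<lambda>i. x + a (2*i+1) + a (2*i+2)) (\<lambda>i. a (2*i+2) * a (2*i+3))))
     = sparse_poly x a (2*m)"
proof (induction m rule: induct_nat_012)
  case 0
  show ?case by (simp add: sparse_poly_def sparse_sets_0)
next
  case 1
  have "sparse_poly x a 2 = x + a 1 + a 2"
    using sparse_poly_even_step[of x a 0]
    by (simp add: sparse_poly_def sparse_sets_0 sparse_sets_1 numeral_2_eq_2)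
  moreover have "det (mat 1 1 (tridiag (\<lambda>i. x + a (2*i+1) + a (2*i+2)) (\<lambda>i. a (2*i+2) * a (2*i+3))))
      = x + a 1 + a 2"
    by (subst det_single) (auto, simp add: numeral_2_eq_2)
  ultimately show ?case
    by simp
next
  case (ge2 m)
  let ?d = "\<lambda>i. x + a (2*i+1) + a (2*i+2)" and ?s = "\<lambda>i. a (2*i+2) * a (2*i+3)"
  have "det (mat (m+2) (m+2) (tridiag ?d ?s))
      = ?d (m+1) * det (mat (m+1) (m+1) (tridiag ?d ?s)) - ?s m * det (mat m m (tridiag ?d ?s))"
    by (rule det_tridiag_Suc_Suc)
  also have "\<dots> = (x + a (2*m+3) + a (2*m+4)) * sparse_poly x a (2*m+2)
      - a (2*m+2) * a (2*m+3) * sparse_poly x a (2*m)"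
    using ge2.IH by (simp add: eval_nat_numeral)
  also have "\<dots> = sparse_poly x a (2*m+4)"
    by (rule sparse_poly_even_rec[symmetric])
  finally show ?case
    by (simp add: eval_nat_numeral)
qed

lemma sparse_sets_with_ends:
  "{S \<in> sparse_sets (n+4). 1 \<in> S \<and> n+4 \<in> S}
     = (\<lambda>T. insert 1 (insert (n+4) ((\<lambda>k. k + 2) ` T))) ` sparse_sets n"
proof (intro equalityI subsetI)
  fix S assume "S \<in> {S \<in> sparse_sets (n+4). 1 \<in> S \<and> n+4 \<in> S}"
  then have S: "S \<in> sparse_sets (n+4)" and ends: "1 \<in> S" "n+4 \<in> S"
    by auto
  define T where "T = {k \<in> {1..n}. k + 2 \<in> S}"
  have inner: "s \<in> {3..n+2}" if "s \<in> S" "s \<noteq> 1" "s \<noteq> n+4" for s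
  proof -
    have "s \<noteq> 2" "s \<noteq> n+3"
      using sparse_setsD(3)[OF S, of 1 s] sparse_setsD(3)[OF S, of s "n+4"] that ends by auto
    then show ?thesis
      using sparse_setsD(1)[OF S] that by auto
  qed
  have "T \<in> sparse_sets n"
    using sparse_setsD(3)[OF S] by (auto simp: sparse_sets_def T_def)
  moreover have "S = insert 1 (insert (n+4) ((\<lambda>k. k + 2) ` T))"
  proof (intro equalityI subsetI)
    fix s assume s: "s \<in> S"
    show "s \<in> insert 1 (insert (n+4) ((\<lambda>k. k + 2) ` T))"
    proof (cases "s = 1 \<or> s = n+4")
      case False
      define k where "k = s - 2"
      have "s = k + 2" "k \<in> {1..n}"
        using inner[OF s] False by (auto simp: k_def)
      then have "k \<in> T"
        using s by (auto simp: T_def)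
      then show ?thesis
        using \<open>s = k + 2\<close> by blast
    qed auto
  qed (use ends in \<open>auto simp: T_def\<close>)
  ultimately show "S \<in> (\<lambda>T. insert 1 (insert (n+4) ((\<lambda>k. k + 2) ` T))) ` sparse_sets n"
    by blast
next
  fix S assume "S \<in> (\<lambda>T. insert 1 (insert (n+4) ((\<lambda>k. k + 2) ` T))) ` sparse_sets n"
  then obtain T where T: "T \<in> sparse_sets n" and S: "S = insert 1 (insert (n+4) ((\<lambda>k. k + 2) ` T))"
    by auto
  show "S \<in> {S \<in> sparse_sets (n+4). 1 \<in> S \<and> n+4 \<in> S}"
    using sparse_setsD(1,3)[OF T] unfolding S sparse_sets_def by fastforce
qed

lemma inj_on_insert_ends_shift:
  "inj_on (\<lambda>T. insert 1 (insert (n+4) ((\<lambda>k. k + 2) ` T))) (sparse_sets n)"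
proof (rule inj_onI)
  fix T T' assume T: "T \<in> sparse_sets n" and T': "T' \<in> sparse_sets n"
    and eq: "insert 1 (insert (n+4) ((\<lambda>k. k + 2) ` T)) = insert 1 (insert (n+4) ((\<lambda>k. k + 2) ` T'))"
  have "insert 1 (insert (n+4) ((\<lambda>k. k + 2) ` U)) - {1, n+4} = (\<lambda>k. k + 2) ` U"
    if "U \<in> sparse_sets n" for U
    using sparse_setsD(1)[OF that] by auto
  then have "(\<lambda>k. k + 2) ` T = (\<lambda>k. k + 2) ` T'"
    using T T' eq by metis
  moreover have "inj (\<lambda>k::nat. k + 2)"
    by (simp add: inj_def)
  ultimately show "T = T'"
    by (simp add: inj_image_eq_iff)
qed

lemma sum_sparse_sets_with_ends:
  fixes a :: "nat \<Rightarrow> 'a::comm_ring_1"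
  assumes "n \<ge> 2"
  shows "(\<Sum>S | S \<in> sparse_sets (2*n) \<and> 1 \<in> S \<and> 2*n \<in> S. (\<Prod>i\<in>S. a i) * x ^ (n - card S))
    = a 1 * a (2*n) * sparse_poly x (\<lambda>k. a (k+2)) (2*n-4)"
proof -
  define m where "m = 2*n - 4"
  have m: "2*n = m + 4" "(m+1) div 2 = n - 2"
    using assms by (simp_all add: m_def)
  define J where "J = (\<lambda>T. insert 1 (insert (m+4) ((\<lambda>k. k + 2) ` T)))"
  have J_card: "card (J T) = card T + 2" and J_prod: "(\<Prod>i\<in>J T. a i) = a 1 * a (m+4) * (\<Prod>i\<in>T. a (i+2))"
    if "T \<in> sparse_sets m" for T
  proof -
    have "1 \<notin> (\<lambda>k. k + 2) ` T" "m+4 \<notin> insert 1 ((\<lambda>k. k + 2) ` T)" "finite T"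
      using sparse_setsD(1,2)[OF that] by auto
    moreover have inj: "inj_on (\<lambda>k. k + 2) T"
      by (simp add: inj_on_def)
    ultimately show "card (J T) = card T + 2" "(\<Prod>i\<in>J T. a i) = a 1 * a (m+4) * (\<Prod>i\<in>T. a (i+2))"
      by (simp_all add: J_def card_image[OF inj] prod.reindex[OF inj] ac_simps
          del: add_2_eq_Suc add_2_eq_Suc')
  qed
  have "(\<Sum>S | S \<in> sparse_sets (2*n) \<and> 1 \<in> S \<and> 2*n \<in> S. (\<Prod>i\<in>S. a i) * x ^ (n - card S))
      = (\<Sum>T\<in>sparse_sets m. (\<Prod>i\<in>J T. a i) * x ^ (n - card (J T)))"
    using sparse_sets_with_ends[of m] inj_on_insert_ends_shift[of m]
    unfolding m(1) J_def by (simp add: sum.reindex)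
  also have "\<dots> = (\<Sum>T\<in>sparse_sets m. a 1 * a (2*n) * ((\<Prod>i\<in>T. a (i+2)) * x ^ ((m+1) div 2 - card T)))"
  proof (rule sum.cong)
    fix T assume T: "T \<in> sparse_sets m"
    have "n - card (J T) = (m+1) div 2 - card T"
      using J_card[OF T] m(2) by simp
    then show "(\<Prod>i\<in>J T. a i) * x ^ (n - card (J T))
        = a 1 * a (2*n) * ((\<Prod>i\<in>T. a (i+2)) * x ^ ((m+1) div 2 - card T))"
      unfolding J_prod[OF T] m(1) by (simp only: ac_simps)
  qed simp
  finally show ?thesis
    by (simp add: sparse_poly_def sum_distrib_left m_def)
qed

lemma e_coef_eq_sum_sparse_sets:
  "e_coef N a k = (\<Sum>S | S \<in> sparse_sets (2*N) \<and> \<not> (1 \<in> S \<and> 2*N \<in> S) \<and> card S = k. \<Prod>i\<in>S. a i)"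
proof (cases "k = 0")
  case True
  have "{S. S \<in> sparse_sets (2*N) \<and> \<not> (1 \<in> S \<and> 2*N \<in> S) \<and> card S = k} = {{}}"
    using True sparse_setsD(2) by (auto simp: sparse_sets_def)
  then show ?thesis
    using True by (simp add: e_coef_def)
next
  case False
  then show ?thesis
    by (simp add: e_coef_def e_idx_def sparse_sets_def conj_ac)
qed

lemma sum_e_coef_eq_sparse_poly:
  assumes N: "N \<ge> 2"
  shows "(\<Sum>k=0..N. e_coef N a k * x ^ (N - k))
    = sparse_poly x a (2*N) - a 1 * a (2*N) * sparse_poly x (\<lambda>k. a (k+2)) (2*N-4)"
proof -
  define open_sets where "open_sets = {S \<in> sparse_sets (2*N). \<not> (1 \<in> S \<and> 2*N \<in> S)}"
  define closed_sets where "closed_sets = {S \<in> sparse_sets (2*N). 1 \<in> S \<and> 2*N \<in> S}"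
  let ?f = "\<lambda>S. (\<Prod>i\<in>S. a i) * x ^ (N - card S)"
  have "(\<Sum>k=0..N. e_coef N a k * x ^ (N - k)) = (\<Sum>k=0..N. \<Sum>S | S \<in> open_sets \<and> card S = k. ?f S)"
    unfolding e_coef_eq_sum_sparse_sets sum_distrib_right open_sets_def by (simp add: conj_assoc)
  also have "\<dots> = sum ?f open_sets"
    by (rule sum.group) (use card_sparse_set_le[of _ "2*N"] in \<open>auto simp: open_sets_def\<close>)
  also have "\<dots> = sum ?f (sparse_sets (2*N)) - sum ?f closed_sets"
  proof -
    have "sparse_sets (2*N) = open_sets \<union> closed_sets"
      by (auto simp: open_sets_def closed_sets_def)
    moreover have "sum ?f (open_sets \<union> closed_sets) = sum ?f open_sets + sum ?f closed_sets"
      by (rule sum.union_disjoint) (auto simp: open_sets_def closed_sets_def)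
    ultimately show ?thesis
      by (simp add: algebra_simps)
  qed
  also have "sum ?f closed_sets = a 1 * a (2*N) * sparse_poly x (\<lambda>k. a (k+2)) (2*N-4)"
    unfolding closed_sets_def by (rule sum_sparse_sets_with_ends[OF N])
  finally show ?thesis
    by (simp add: sparse_poly_def)
qed

lemma prod_consecutive_pairs:
  fixes a :: "nat \<Rightarrow> 'a::comm_monoid_mult"
  shows "(\<Prod>i<m. a (2*i+2) * a (2*i+3)) = (\<Prod>i\<in>{2..<2*m+2}. a i)"
proof (induction m)
  case (Suc m)
  have "{2..<2 * Suc m + 2} = insert (2*m+3) (insert (2*m+2) {2..<2*m+2})"
    by auto
  then show ?case
    using Suc.IH by (simp add: ac_simps)
qed simp

lemma prod_atLeastAtMost_1_double:
  fixes a :: "nat \<Rightarrow> 'a::comm_monoid_mult"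
  assumes "N \<ge> 1"
  shows "(\<Prod>i=1..2*N. a i) = a 1 * a (2*N) * (\<Prod>i<N-1. a (2*i+2) * a (2*i+3))"
proof -
  have "{1..2*N} = insert 1 (insert (2*N) {2..<2*(N-1)+2})"
    and "2*N \<notin> {2..<2*(N-1)+2}" and "1 \<notin> insert (2*N) {2..<2*(N-1)+2}"
    using assms by auto
  then have "(\<Prod>i=1..2*N. a i) = a 1 * (a (2*N) * (\<Prod>i\<in>{2..<2*(N-1)+2}. a i))"
    by (simp only: prod.insert finite_insert finite_atLeastLessThan not_False_eq_True)
  then show ?thesis
    by (simp only: prod_consecutive_pairs mult.assoc)
qed

lemma G_N_eq_sparse_poly:
  assumes N: "N \<ge> 3" and y: "y \<noteq> 0"
  shows "G_N N x y a = sparse_poly x a (2*N) + (\<Prod>i=1..2*N. a i) / y + y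
    - a 1 * a (2*N) * sparse_poly x (\<lambda>k. a (k+2)) (2*N-4)"
proof -
  let ?d = "\<lambda>i. x + a (2*i+1) + a (2*i+2)" and ?s = "\<lambda>i. a (2*i+2) * a (2*i+3)"
  let ?u = "(-1)^(N-1) * a 1 * a (2*N) / y" and ?v = "(-1)^(N-1) * y"
  have sign: "(-1::complex)^(N-1) * (-1)^(N-1) = 1"
    by (simp flip: power_mult_distrib)
  have inner: "tridiag (?d \<circ> Suc) (?s \<circ> Suc)
      = tridiag (\<lambda>i. x + a (2*i+1+2) + a (2*i+2+2)) (\<lambda>i. a (2*i+2+2) * a (2*i+3+2))"
    by (simp add: comp_def)
  have "G_N N x y a = det (mat N N (\<lambda>(i,j). if i = 0 \<and> j = N-1 then ?u
      else if i = N-1 \<and> j = 0 then ?v else tridiag ?d ?s (i,j)))"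
    unfolding G_N_def GN_matrix_def by (rule det_mat_cong) (auto simp: tridiag_def)
  also have "\<dots> = sparse_poly x a (2*N) + (-1)^(N-1) * ?u * (\<Prod>i<N-1. ?s i) + (-1)^(N-1) * ?v
      - ?u * ?v * sparse_poly x (\<lambda>k. a (k+2)) (2*(N-2))"
    unfolding det_tridiag_with_corners[OF N] inner det_tridiag_eq_sparse_poly
      det_tridiag_eq_sparse_poly[of "N-2" x "\<lambda>k. a (k+2)"] ..
  also have "(-1)^(N-1) * ?u * (\<Prod>i<N-1. ?s i)
      = (-1)^(N-1) * (-1)^(N-1) * (a 1 * a (2*N) * (\<Prod>i<N-1. ?s i)) / y"
    by (simp add: ac_simps)
  also have "\<dots> = (\<Prod>i=1..2*N. a i) / y"
    using prod_atLeastAtMost_1_double[of N a] N unfolding sign by simp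
  also have "(-1)^(N-1) * ?v = y"
    using sign by (simp add: mult.assoc[symmetric])
  also have "?u * ?v = a 1 * a (2*N)"
    using sign y by (simp add: ac_simps)
  also have "2*(N-2) = 2*N-4"
    by simp
  finally show ?thesis .
qed

theorem mainTheorem1:
  fixes N :: nat and x y :: complex and a :: "nat \<Rightarrow> complex"
  assumes "N \<ge> 3" and "y \<noteq> 0"
  shows "G_N N x y a = y + (\<Prod>i=1..2*N. a i) / y + (\<Sum>k=0..N. e_coef N a k * x ^ (N - k))"
  using G_N_eq_sparse_poly[OF assms, of x a] sum_e_coef_eq_sparse_poly[of N a x] assms(1)
  by simp

end
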